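(* Fix $i\in[n]$ and $\mathbf{x}_{-i}\in\mathcal{C}_{-i}$, write $A=A(\mathbf{x}_{-i})$, and suppose $\mathbf{x}_i=(x_{ij})$ is a best response of player $i$, i.e. $\mathbf{x}_i\in\arg\max_{\mathbf{y}\in\vartheta_i(\mathbf{x}_{-i})}\mathcal{V}_i(\mathbf{y};\mathbf{x}_{-i})$. Then $(x_{ij})_{j\in A}$ is of one of the following two types. Type I: there is $J\subset A$ such that $x_{ij}=0$ for $j\in A\setminus J$, $\sum_{j\in J}x_{ij}<1$, and $(x_{ij})_{j\in J}$ is the unique solution (with $x_{ij}\in(0,\omega_{ij}-\mathbf{x}_T^{j|i})$) of the system $\psi_{ij}(x_{ij};\mathbf{x}_T^{j|i})=0$, $j\in J$. Type II: there are $J\subset A$ and a real $\kappa_0\ge0$ such that $x_{ij}=0$ for $j\in A\setminus J$, and $(x_{ij})_{j\in J}$ is given by the unique solution (with $x_{ij}\in(0,\omega_{ij}-\mathbf{x}_T^{j|i})$) of the system $\sum_{j\in J}x_{ij}=1$ and $x_{ij}^{a_i-1}\psi_{ij}(x_{ij};\mathbf{x}_T^{j|i})=\kappa_0$ for $j\in J$.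
   Context: Fragile multi-CPR Game: $n,m\ge1$, $[k]=\{1,\dots,k\}$, $C_m=\{(x_1,\dots,x_m)\in[0,1]^m:\sum_j x_j\le1\}$, $\mathcal{C}_{-i}=\prod_{[n]\setminus\{i\}}C_m$; for a profile $(\mathbf{x}_i,\mathbf{x}_{-i})$, $\mathbf{x}_\ell=(x_{\ell1},\dots,x_{\ell m})$, put $\mathbf{x}_T^{(j)}=\sum_{\ell}x_{\ell j}$ and $\mathbf{x}_T^{j|i}=\sum_{\ell\ne i}x_{\ell j}$. Each CPR $j$ has a return rate $\mathcal{R}_j(t)>1$ and failure probability $p_j(t)\in[0,1]$; each player $i$ has parameters $a_i,k_i$. Effective rate: $\mathcal{F}_{ij}(t)=(\mathcal{R}_j(t)-1)^{a_i}(1-p_j(t))-k_ip_j(t)$; utility $\mathcal{V}_i(\mathbf{x}_i;\mathbf{x}_{-i})=\sum_j x_{ij}^{a_i}\mathcal{F}_{ij}(\mathbf{x}_T^{(j)})$. Assumption: (1) $p_j(0)=0$, $p_j(t)=1$ for $t\ge1$; (2) $a_i\in(0,1]$, $k_i>0$; (3) each $\mathcal{F}_{ij}$ (continuous on $[0,1]$) has strictly negative first and second derivatives on $(0,1)$. Let $\omega_{ij}\in(0,1)$ be the unique zero of $\mathcal{F}_{ij}$ in $(0,1)$. Active CPRs: $A(\mathbf{x}_{-i})=\{j:\mathbf{x}_T^{j|i}<\omega_{ij}\}$. Constraint policy: $\vartheta_i(\mathbf{x}_{-i})=C_m\cap\big(\prod_{j\in A(\mathbf{x}_{-i})}[0,\omega_{ij}-\mathbf{x}_T^{j|i}]\times\prod_{j\notin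 A(\mathbf{x}_{-i})}\{0\}\big)$. Define $\psi_{ij}(x;s)=x\,\mathcal{F}_{ij}'(x+s)+a_i\mathcal{F}_{ij}(x+s)$. *)

theory Defs
  imports "HOL-Analysis.Analysis"
begin

definition Frate :: "(nat \<Rightarrow> real \<Rightarrow> real) \<Rightarrow> (nat \<Rightarrow> real \<Rightarrow> real) \<Rightarrow>
    (nat \<Rightarrow> real) \<Rightarrow> (nat \<Rightarrow> real) \<Rightarrow> nat \<Rightarrow> nat \<Rightarrow> real \<Rightarrow> real" where
  "Frate R p a k i j t = (R j t - 1) powr (a i) * (1 - p j t) - k i * p j t"

definition Csimplex :: "nat \<Rightarrow> (nat \<Rightarrow> real) set" where
  "Csimplex m = {z. (\<forall>j\<in>{1..m}. 0 \<le> z j \<and> z j \<le> 1) \<and> (\<Sum>j\<in>{1..m}. z j) \<le> 1}"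

definition others_total :: "nat \<Rightarrow> (nat \<Rightarrow> nat \<Rightarrow> real) \<Rightarrow> nat \<Rightarrow> nat \<Rightarrow> real" where
  "others_total n x i j = (\<Sum>l\<in>{1..n} - {i}. x l j)"

definition omega :: "(real \<Rightarrow> real) \<Rightarrow> real" where
  "omega F = (THE w. w \<in> {0<..<1} \<and> F w = 0)"

definition psi :: "(real \<Rightarrow> real) \<Rightarrow> real \<Rightarrow> real \<Rightarrow> real \<Rightarrow> real" where
  "psi F a x s = x * deriv F (x + s) + a * F (x + s)"

definition utility :: "(nat \<Rightarrow> real \<Rightarrow> real) \<Rightarrow> (nat \<Rightarrow> real \<Rightarrow> real) \<Rightarrow>
    (nat \<Rightarrow> real) \<Rightarrow> (nat \<Rightarrow> real) \<Rightarrow> nat \<Rightarrow> nat \<Rightarrow> nat \<Rightarrow>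
    (nat \<Rightarrow> nat \<Rightarrow> real) \<Rightarrow> (nat \<Rightarrow> real) \<Rightarrow> real" where
  "utility R p a k n m i x y =
     (\<Sum>j\<in>{1..m}. y j powr (a i) * Frate R p a k i j (y j + others_total n x i j))"

definition active :: "(nat \<Rightarrow> real \<Rightarrow> real) \<Rightarrow> (nat \<Rightarrow> real \<Rightarrow> real) \<Rightarrow>
    (nat \<Rightarrow> real) \<Rightarrow> (nat \<Rightarrow> real) \<Rightarrow> nat \<Rightarrow> nat \<Rightarrow> nat \<Rightarrow>
    (nat \<Rightarrow> nat \<Rightarrow> real) \<Rightarrow> nat set" where
  "active R p a k n m i x =
     {j\<in>{1..m}. others_total n x i j < omega (Frate R p a k i j)}"

definition constraint :: "(nat \<Rightarrow> real \<Rightarrow> real) \<Rightarrow> (nat \<Rightarrow> real \<Rightarrow> real) \<Rightarrow>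
    (nat \<Rightarrow> real) \<Rightarrow> (nat \<Rightarrow> real) \<Rightarrow> nat \<Rightarrow> nat \<Rightarrow> nat \<Rightarrow>
    (nat \<Rightarrow> nat \<Rightarrow> real) \<Rightarrow> (nat \<Rightarrow> real) set" where
  "constraint R p a k n m i x =
     Csimplex m \<inter>
     {z. \<forall>j\<in>{1..m}.
          (j \<in> active R p a k n m i x \<longrightarrow>
             0 \<le> z j \<and> z j \<le> omega (Frate R p a k i j) - others_total n x i j) \<and>
          (j \<notin> active R p a k n m i x \<longrightarrow> z j = 0)}"

end

theory Submission
  imports Defs
begin

text \<open>
  Write \<open>s\<^sub>j\<close> for the others' total investment in CPR \<open>j\<close>. A best response maximises the
  separable sum of \<open>G\<^sub>j(t) = t\<^sup>a F\<^sub>i\<^sub>j(t + s\<^sub>j)\<close> over the simplex with caps \<open>\<omega>\<^sub>i\<^sub>j - s\<^sub>j\<close> on the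
  active CPRs (and cap 0 on the others). Since \<open>G\<^sub>j\<close> vanishes at its cap and is positive
  below it, every positive coordinate is interior, and there \<open>G\<^sub>j' = t\<^sup>a\<^sup>-\<^sup>1 \<psi>\<^sub>i\<^sub>j\<close>. If the budget
  is slack, the first-order conditions make all these derivatives vanish (Type I). If it is
  exhausted, shifting mass between two coordinates shows that their derivatives agree, and
  withdrawing mass shows that the common value \<open>\<kappa>\<^sub>0\<close> is nonnegative (Type II). Uniqueness
  holds coordinatewise: concavity makes \<open>\<psi>\<^sub>i\<^sub>j\<close> strictly decreasing, and for \<open>a \<le> 1\<close> so is
  \<open>t\<^sup>a\<^sup>-\<^sup>1 \<psi>\<^sub>i\<^sub>j\<close> wherever \<open>\<psi>\<^sub>i\<^sub>j \<ge> 0\<close>.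
\<close>

lemma sum_fun_upd:
  fixes G :: "'a \<Rightarrow> 'b \<Rightarrow> 'c::ab_group_add"
  assumes "finite S" "j \<in> S"
  shows "(\<Sum>l\<in>S. G l ((z(j := t)) l)) = (\<Sum>l\<in>S. G l (z l)) - G j (z j) + G j t"
proof -
  have "(\<Sum>l\<in>S - {j}. G l ((z(j := t)) l)) = (\<Sum>l\<in>S - {j}. G l (z l))"
    by (rule sum.cong) auto
  then show ?thesis
    using sum.remove[OF assms, of "\<lambda>l. G l ((z(j := t)) l)"] sum.remove[OF assms, of "\<lambda>l. G l (z l)"]
    by simp
qed

section \<open>Rate functions\<close>

locale concave_decreasing_rate =
  fixes F :: "real \<Rightarrow> real"
  assumes continuous: "continuous_on {0..1} F"
    and derivatives_neg: "\<exists>F1 F2. \<forall>t\<in>{0<..<1}. (F has_real_derivative F1 t) (at t) \<and>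
        (F1 has_real_derivative F2 t) (at t) \<and> F1 t < 0 \<and> F2 t < 0"
    and pos_at_0: "0 < F 0"
    and neg_at_1: "F 1 < 0"
begin

lemma has_deriv: "0 < t \<Longrightarrow> t < 1 \<Longrightarrow> (F has_real_derivative deriv F t) (at t)"
  and deriv_neg: "0 < t \<Longrightarrow> t < 1 \<Longrightarrow> deriv F t < 0"
  and deriv_strict_decreasing: "0 < u \<Longrightarrow> u < v \<Longrightarrow> v < 1 \<Longrightarrow> deriv F v < deriv F u"
proof -
  obtain F1 F2 where d: "\<forall>t\<in>{0<..<1}. (F has_real_derivative F1 t) (at t) \<and>
      (F1 has_real_derivative F2 t) (at t) \<and> F1 t < 0 \<and> F2 t < 0"
    using derivatives_neg by blast
  have F1: "deriv F t = F1 t" if "0 < t" "t < 1" for t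
    using d that by (auto intro: DERIV_imp_deriv)
  show "(F has_real_derivative deriv F t) (at t)" "deriv F t < 0" if "0 < t" "t < 1"
    using d F1 that by auto
  show "deriv F v < deriv F u" if "0 < u" "u < v" "v < 1"
  proof -
    have "F1 v < F1 u"
      by (rule DERIV_neg_imp_decreasing[OF \<open>u < v\<close>]) (use d that in force)
    then show ?thesis using F1 that by simp
  qed
qed

lemma strict_decreasing:
  assumes "0 \<le> u" "u < v" "v \<le> 1"
  shows "F v < F u"
proof (rule DERIV_neg_imp_decreasing_open[OF \<open>u < v\<close>])
  show "\<exists>y. DERIV F t :> y \<and> y < 0" if "u < t" "t < v" for t
  proof -
    have "0 < t" "t < 1"
      using that assms by auto
    then show ?thesis
      using has_deriv deriv_neg by blast
  qed
  show "continuous_on {u..v} F"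
    using continuous_on_subset[OF continuous] assms by auto
qed

lemma omega_root: "0 < omega F" "omega F < 1" "F (omega F) = 0"
proof -
  obtain w where w: "0 \<le> w" "w \<le> 1" "F w = 0"
    using IVT2'[of F 1 0 0] continuous pos_at_0 neg_at_1 by force
  then have w01: "w \<in> {0<..<1}"
    using pos_at_0 neg_at_1 by (auto simp: order_le_less)
  have "omega F = w"
    unfolding omega_def
  proof (rule the_equality)
    show "w \<in> {0<..<1} \<and> F w = 0"
      using w w01 by simp
    show "v = w" if "v \<in> {0<..<1} \<and> F v = 0" for v
      using strict_decreasing[of v w] strict_decreasing[of w v] that w w01
      by (cases v w rule: linorder_cases) auto
  qed
  then show "0 < omega F" "omega F < 1" "F (omega F) = 0"
    using w w01 by auto
qed

lemma pos_below_omega: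
  assumes "0 \<le> t" "t < omega F"
  shows "0 < F t"
  using strict_decreasing[OF assms less_imp_le[OF omega_root(2)]] omega_root(3) by simp

lemma payoff_has_deriv:
  assumes "0 < t" "0 \<le> s" "t + s < 1"
  shows "((\<lambda>t. t powr a * F (t + s)) has_real_derivative t powr (a - 1) * psi F a t s) (at t)"
proof -
  have "(F has_real_derivative deriv F (t + s)) (at (t + s))"
    using has_deriv assms by simp
  then have "((\<lambda>t. F (t + s)) has_real_derivative deriv F (t + s) * 1) (at t)"
    by (rule DERIV_chain2) (auto intro!: derivative_eq_intros)
  note DERIV_mult[OF has_real_derivative_powr[OF \<open>0 < t\<close>, of a] this]
  moreover have "t powr a = t * t powr (a - 1)"
    using powr_mult_base[of t "a - 1"] assms by simp
  ultimately show ?thesis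
    unfolding psi_def by (simp add: algebra_simps)
qed

text \<open>Concavity enters here: \<open>x F'(x + s)\<close> decreases because \<open>F'\<close> is negative and decreasing.\<close>

lemma psi_strict_decreasing:
  assumes "0 \<le> a" "0 \<le> s" "0 < t1" "t1 < t2" "t2 + s < 1"
  shows "psi F a t2 s < psi F a t1 s"
proof -
  have "t2 * deriv F (t2 + s) < t2 * deriv F (t1 + s)"
    using deriv_strict_decreasing[of "t1 + s" "t2 + s"] assms by simp
  also have "\<dots> < t1 * deriv F (t1 + s)"
    using deriv_neg[of "t1 + s"] assms by (simp add: mult_strict_right_mono_neg)
  finally have "t2 * deriv F (t2 + s) < t1 * deriv F (t1 + s)" .
  moreover have "a * F (t2 + s) \<le> a * F (t1 + s)"
    using strict_decreasing[of "t1 + s" "t2 + s"] assms by (simp add: mult_left_mono)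
  ultimately show ?thesis
    unfolding psi_def by simp
qed

lemma psi_zero_unique:
  assumes "0 \<le> a" "0 \<le> s" "0 < t1" "t1 + s < 1" "0 < t2" "t2 + s < 1"
    and "psi F a t1 s = 0" "psi F a t2 s = 0"
  shows "t1 = t2"
  using psi_strict_decreasing[of a s t1 t2] psi_strict_decreasing[of a s t2 t1] assms
  by (cases t1 t2 rule: linorder_cases) simp_all

lemma marginal_payoff_strict_decreasing:
  assumes "0 \<le> a" "a \<le> 1" "0 \<le> s" "0 < t1" "t1 < t2" "t2 + s < 1" "0 \<le> psi F a t2 s"
  shows "t2 powr (a - 1) * psi F a t2 s < t1 powr (a - 1) * psi F a t1 s"
proof -
  have "t2 powr (a - 1) * psi F a t2 s \<le> t1 powr (a - 1) * psi F a t2 s"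
    using powr_mono2'[of "a - 1" t1 t2] assms by (simp add: mult_right_mono)
  also have "\<dots> < t1 powr (a - 1) * psi F a t1 s"
    using psi_strict_decreasing[of a s t1 t2] assms by simp
  finally show ?thesis .
qed

lemma marginal_payoff_level_unique:
  assumes "0 \<le> a" "a \<le> 1" "0 \<le> s" "0 \<le> \<kappa>"
    and "0 < t1" "t1 + s < 1" "t1 powr (a - 1) * psi F a t1 s = \<kappa>"
    and "0 < t2" "t2 + s < 1" "t2 powr (a - 1) * psi F a t2 s = \<kappa>"
  shows "t1 = t2"
proof -
  have "0 \<le> psi F a t s" if "0 < t" "t powr (a - 1) * psi F a t s = \<kappa>" for t
    using that \<open>0 \<le> \<kappa>\<close> zero_le_mult_iff[of "t powr (a - 1)"] by auto
  then show ?thesis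
    using marginal_payoff_strict_decreasing[of a s t1 t2]
      marginal_payoff_strict_decreasing[of a s t2 t1] assms
    by (cases t1 t2 rule: linorder_cases) auto
qed

end

section \<open>Maximising a separable function over a capped simplex\<close>

definition capped_simplex :: "'j set \<Rightarrow> ('j \<Rightarrow> real) \<Rightarrow> ('j \<Rightarrow> real) set" where
  "capped_simplex I u = {z. (\<forall>j\<in>I. 0 \<le> z j \<and> z j \<le> u j) \<and> (\<Sum>j\<in>I. z j) \<le> 1}"

locale capped_simplex_maximizer =
  fixes I :: "'j set" and u :: "'j \<Rightarrow> real" and G :: "'j \<Rightarrow> real \<Rightarrow> real" and y :: "'j \<Rightarrow> real"
  assumes finite: "finite I"
    and feasible: "y \<in> capped_simplex I u"
    and maximal: "\<And>z. z \<in> capped_simplex I u \<Longrightarrow> (\<Sum>j\<in>I. G j (z j)) \<le> (\<Sum>j\<in>I. G j (y j))"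
begin

lemma feasibleD: "j \<in> I \<Longrightarrow> 0 \<le> y j" "j \<in> I \<Longrightarrow> y j \<le> u j" "(\<Sum>j\<in>I. y j) \<le> 1"
  using feasible by (auto simp: capped_simplex_def)

lemma coordinate_le:
  assumes "j \<in> I" "0 \<le> t" "t \<le> u j" "(\<Sum>l\<in>I. y l) - y j + t \<le> 1"
  shows "G j t \<le> G j (y j)"
proof -
  have "y(j := t) \<in> capped_simplex I u"
    using feasible assms sum_fun_upd[OF finite \<open>j \<in> I\<close>, of "\<lambda>_ t. t" y t]
    by (auto simp: capped_simplex_def)
  from maximal[OF this] show ?thesis
    using sum_fun_upd[OF finite \<open>j \<in> I\<close>, of G y t] by simp
qed

lemma transfer_le:
  assumes "j \<in> I" "j0 \<in> I" "j \<noteq> j0"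
    and "0 \<le> y j + h" "y j + h \<le> u j" "0 \<le> y j0 - h" "y j0 - h \<le> u j0"
  shows "G j (y j + h) + G j0 (y j0 - h) \<le> G j (y j) + G j0 (y j0)"
proof -
  define z where "z = (y(j := y j + h))(j0 := y j0 - h)"
  have "(\<Sum>l\<in>I. z l) = (\<Sum>l\<in>I. y l)"
    using sum_fun_upd[OF finite \<open>j0 \<in> I\<close>, of "\<lambda>_ t. t" "y(j := y j + h)"]
      sum_fun_upd[OF finite \<open>j \<in> I\<close>, of "\<lambda>_ t. t" y] \<open>j \<noteq> j0\<close>
    unfolding z_def by simp
  then have "z \<in> capped_simplex I u"
    using feasible assms unfolding z_def capped_simplex_def by auto
  from maximal[OF this] show ?thesis
    using sum_fun_upd[OF finite \<open>j0 \<in> I\<close>, of G "y(j := y j + h)"]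
      sum_fun_upd[OF finite \<open>j \<in> I\<close>, of G y] \<open>j \<noteq> j0\<close>
    unfolding z_def by simp
qed

lemma deriv_zero_if_slack:
  assumes "(\<Sum>l\<in>I. y l) < 1" "j \<in> I" "0 < y j" "y j < u j"
    and "(G j has_real_derivative D) (at (y j))"
  shows "D = 0"
proof (rule DERIV_local_max[OF assms(5)])
  define d where "d = min (y j) (min (u j - y j) (1 - (\<Sum>l\<in>I. y l)))"
  show "0 < d"
    using assms unfolding d_def by simp
  show "\<forall>t. \<bar>y j - t\<bar> < d \<longrightarrow> G j t \<le> G j (y j)"
    using coordinate_le[OF \<open>j \<in> I\<close>] unfolding d_def by (auto simp: abs_less_iff)
qed

lemma deriv_nonneg:
  assumes "j \<in> I" "0 < y j" "(G j has_real_derivative D) (at (y j))"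
  shows "0 \<le> D"
proof (rule ccontr)
  assume "\<not> 0 \<le> D"
  then obtain d where d: "0 < d" "\<And>h. 0 < h \<Longrightarrow> h < d \<Longrightarrow> G j (y j) < G j (y j - h)"
    using DERIV_neg_dec_left[OF assms(3)] by force
  define h where "h = min d (y j) / 2"
  have "G j (y j - h) \<le> G j (y j)"
    using coordinate_le[OF \<open>j \<in> I\<close>, of "y j - h"] feasibleD(2)[OF \<open>j \<in> I\<close>] feasibleD(3) assms d
    unfolding h_def by simp
  moreover have "G j (y j) < G j (y j - h)"
    using d assms unfolding h_def by simp
  ultimately show False by simp
qed

lemma deriv_eq:
  assumes "j \<in> I" "0 < y j" "y j < u j" "(G j has_real_derivative D) (at (y j))"
    and "j0 \<in> I" "0 < y j0" "y j0 < u j0" "(G j0 has_real_derivative D0) (at (y j0))"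
  shows "D = D0"
proof (cases "j = j0")
  case True
  then show ?thesis using assms DERIV_unique by blast
next
  case False
  define H where "H h = G j (y j + h) + G j0 (y j0 - h)" for h
  have "(H has_real_derivative D - D0) (at 0)"
    unfolding H_def using assms(4,8)
    by (auto intro!: derivative_eq_intros DERIV_chain2[where f = "G j"] DERIV_chain2[where f = "G j0"])
  then have "D - D0 = 0"
  proof (rule DERIV_local_max)
    define d where "d = min (min (y j) (u j - y j)) (min (y j0) (u j0 - y j0))"
    show "0 < d"
      using assms unfolding d_def by simp
    show "\<forall>h. \<bar>0 - h\<bar> < d \<longrightarrow> H h \<le> H 0"
      using transfer_le[OF \<open>j \<in> I\<close> \<open>j0 \<in> I\<close> False] unfolding H_def d_def
      by (auto simp: abs_less_iff)
  qed
  then show ?thesis by simp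
qed

end

section \<open>Best responses\<close>

definition type_I_response ::
    "('j \<Rightarrow> real \<Rightarrow> real) \<Rightarrow> real \<Rightarrow> ('j \<Rightarrow> real) \<Rightarrow> 'j set \<Rightarrow> ('j \<Rightarrow> real) \<Rightarrow> bool" where
  "type_I_response F a s A y \<longleftrightarrow> (\<exists>J. J \<subseteq> A \<and> (\<forall>j\<in>A - J. y j = 0) \<and> (\<Sum>j\<in>J. y j) < 1 \<and>
     (\<forall>j\<in>J. 0 < y j \<and> y j < omega (F j) - s j \<and> psi (F j) a (y j) (s j) = 0) \<and>
     (\<forall>z. (\<forall>j\<in>J. 0 < z j \<and> z j < omega (F j) - s j \<and> psi (F j) a (z j) (s j) = 0)
        \<longrightarrow> (\<forall>j\<in>J. z j = y j)))"

definition type_II_response ::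
    "('j \<Rightarrow> real \<Rightarrow> real) \<Rightarrow> real \<Rightarrow> ('j \<Rightarrow> real) \<Rightarrow> 'j set \<Rightarrow> ('j \<Rightarrow> real) \<Rightarrow> bool" where
  "type_II_response F a s A y \<longleftrightarrow> (\<exists>J \<kappa>0. J \<subseteq> A \<and> \<kappa>0 \<ge> 0 \<and> (\<forall>j\<in>A - J. y j = 0) \<and>
     (\<Sum>j\<in>J. y j) = 1 \<and>
     (\<forall>j\<in>J. 0 < y j \<and> y j < omega (F j) - s j \<and>
        y j powr (a - 1) * psi (F j) a (y j) (s j) = \<kappa>0) \<and>
     (\<forall>z. ((\<Sum>j\<in>J. z j) = 1 \<and>
           (\<forall>j\<in>J. 0 < z j \<and> z j < omega (F j) - s j \<and>
              z j powr (a - 1) * psi (F j) a (z j) (s j) = \<kappa>0))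
        \<longrightarrow> (\<forall>j\<in>J. z j = y j)))"

text \<open>
  \<open>A\<close> is the set of active CPRs and \<open>s j\<close> the others' investment in CPR \<open>j\<close>; an
  inactive coordinate is modelled by the cap \<open>u j = 0\<close>.
\<close>

locale best_response = capped_simplex_maximizer I u "\<lambda>j t. t powr a * F j (t + s j)" y
  for I :: "'j set" and u F s and a :: real and y +
  fixes A :: "'j set"
  assumes active_subset: "A \<subseteq> I"
    and rate: "\<And>j. j \<in> A \<Longrightarrow> concave_decreasing_rate (F j)"
    and others_nonneg: "\<And>j. j \<in> A \<Longrightarrow> 0 \<le> s j"
    and cap_active: "\<And>j. j \<in> A \<Longrightarrow> u j = omega (F j) - s j"
    and cap_inactive: "\<And>j. j \<in> I - A \<Longrightarrow> u j = 0"
    and exponent: "0 \<le> a" "a \<le> 1"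
begin

definition support :: "'j set" where
  "support = {j\<in>A. 0 < y j}"

lemma support_subset: "support \<subseteq> A"
  unfolding support_def by auto

lemma zero_off_support: "\<forall>j\<in>A - support. y j = 0"
  using feasibleD active_subset unfolding support_def by force

lemma sum_support: "(\<Sum>j\<in>support. y j) = (\<Sum>j\<in>I. y j)"
proof (rule sum.mono_neutral_left[OF finite])
  show "\<forall>j\<in>I - support. y j = 0"
    using zero_off_support feasibleD cap_inactive by force
qed (use support_subset active_subset in auto)

text \<open>The payoff vanishes at the cap and is positive below it.\<close>

lemma support_below_cap:
  assumes "j \<in> support"
  shows "y j < omega (F j) - s j"
proof (rule ccontr)
  assume "\<not> y j < omega (F j) - s j"
  have jA: "j \<in> A" and jI: "j \<in> I" and pos: "0 < y j"
    using assms active_subset unfolding support_def by auto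
  interpret concave_decreasing_rate "F j" using rate[OF jA] .
  have at_cap: "y j = omega (F j) - s j"
    using \<open>\<not> y j < omega (F j) - s j\<close> feasibleD(2)[OF jI] cap_active[OF jA] by simp
  have "(y j / 2) powr a * F j (y j / 2 + s j) \<le> y j powr a * F j (y j + s j)"
    by (rule coordinate_le[OF jI]) (use pos feasibleD(2)[OF jI] feasibleD(3) in auto)
  moreover have "y j powr a * F j (y j + s j) = 0"
    using at_cap omega_root(3) by simp
  moreover have "0 < F j (y j / 2 + s j)"
    by (rule pos_below_omega) (use others_nonneg[OF jA] pos at_cap in linarith)+
  ultimately show False
    using pos by (simp add: mult_le_0_iff)
qed

lemma support_interior:
  assumes "j \<in> support"
  shows "j \<in> I" "0 < y j" "y j < u j" "y j + s j < 1"
proof -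
  have jA: "j \<in> A" and "0 < y j"
    using assms unfolding support_def by auto
  then show "j \<in> I" "0 < y j"
    using active_subset by auto
  show "y j < u j"
    using support_below_cap[OF assms] cap_active[OF jA] by simp
  show "y j + s j < 1"
    using support_below_cap[OF assms] concave_decreasing_rate.omega_root(2)[OF rate[OF jA]] by simp
qed

lemma support_marginal_payoff:
  assumes "j \<in> support"
  shows "((\<lambda>t. t powr a * F j (t + s j)) has_real_derivative
      y j powr (a - 1) * psi (F j) a (y j) (s j)) (at (y j))"
proof -
  have jA: "j \<in> A"
    using assms support_subset by auto
  show ?thesis
    using concave_decreasing_rate.payoff_has_deriv[OF rate[OF jA]]
      support_interior(2,4)[OF assms] others_nonneg[OF jA] by simp
qed

lemma type_I_if_slack:
  assumes "(\<Sum>j\<in>I. y j) < 1"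
  shows "type_I_response F a s A y"
  unfolding type_I_response_def
proof (intro exI[of _ support] conjI ballI allI impI)
  show psi0: "psi (F j) a (y j) (s j) = 0" if "j \<in> support" for j
    using deriv_zero_if_slack[OF assms support_interior(1-3)[OF that] support_marginal_payoff[OF that]]
      support_interior(2)[OF that] by simp
  show "z j = y j" if hz: "\<forall>j\<in>support. 0 < z j \<and> z j < omega (F j) - s j \<and>
      psi (F j) a (z j) (s j) = 0" and j: "j \<in> support" for z j
  proof -
    have jA: "j \<in> A"
      using j support_subset by auto
    interpret concave_decreasing_rate "F j" using rate[OF jA] .
    show ?thesis
      by (rule psi_zero_unique[of a "s j"])
        (use exponent others_nonneg[OF jA] hz j omega_root(2) psi0[OF j] support_interior[OF j] in auto)
  qed
qed (use support_subset zero_off_support sum_support assms support_below_cap support_interior(2)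
  in simp_all)

lemma type_II_if_tight:
  assumes "(\<Sum>j\<in>I. y j) = 1"
  shows "type_II_response F a s A y"
proof -
  obtain j0 where j0: "j0 \<in> support"
    using assms sum_support by fastforce
  define \<kappa> where "\<kappa> = y j0 powr (a - 1) * psi (F j0) a (y j0) (s j0)"
  have "0 \<le> \<kappa>"
    using deriv_nonneg support_interior[OF j0] support_marginal_payoff[OF j0] unfolding \<kappa>_def by simp
  have level: "y j powr (a - 1) * psi (F j) a (y j) (s j) = \<kappa>" if "j \<in> support" for j
    using deriv_eq[OF support_interior(1-3)[OF that] support_marginal_payoff[OF that]
        support_interior(1-3)[OF j0] support_marginal_payoff[OF j0]]
    unfolding \<kappa>_def .
  show ?thesis
    unfolding type_II_response_def
  proof (intro exI[of _ support] exI[of _ \<kappa>] conjI ballI allI impI)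
    show "z j = y j" if hz: "(\<Sum>j\<in>support. z j) = 1 \<and> (\<forall>j\<in>support. 0 < z j \<and>
        z j < omega (F j) - s j \<and> z j powr (a - 1) * psi (F j) a (z j) (s j) = \<kappa>)"
      and j: "j \<in> support" for z j
    proof -
      have jA: "j \<in> A"
        using j support_subset by auto
      interpret concave_decreasing_rate "F j" using rate[OF jA] .
      show ?thesis
        by (rule marginal_payoff_level_unique[of a "s j" \<kappa>])
          (use exponent others_nonneg[OF jA] \<open>0 \<le> \<kappa>\<close> hz j omega_root(2) level[OF j]
            support_interior[OF j] in auto)
    qed
  qed (use support_subset \<open>0 \<le> \<kappa>\<close> zero_off_support sum_support assms support_below_cap
      support_interior(2) level in simp_all)
qed

theorem type_I_or_type_II:
  "type_I_response F a s A y \<or> type_II_response F a s A y"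
  using type_I_if_slack type_II_if_tight feasibleD(3) by fastforce

end

section \<open>The fragile multi-CPR game\<close>

lemma concave_decreasing_rate_Frate:
  assumes "continuous_on {0..1} (Frate R p a k i j)"
    and "\<exists>F1 F2. \<forall>t\<in>{0<..<1}. (Frate R p a k i j has_real_derivative F1 t) (at t) \<and>
        (F1 has_real_derivative F2 t) (at t) \<and> F1 t < 0 \<and> F2 t < 0"
    and "1 < R j 0" "p j 0 = 0" "p j 1 = 1" "0 < k i"
  shows "concave_decreasing_rate (Frate R p a k i j)"
  using assms by unfold_locales (simp_all add: Frate_def)

lemma others_total_nonneg:
  assumes "\<forall>l\<in>{1..n} - {i}. x l \<in> Csimplex m" "j \<in> {1..m}"
  shows "0 \<le> others_total n x i j"
  unfolding others_total_def using assms by (intro sum_nonneg) (auto simp: Csimplex_def)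

lemma Csimplex_eq: "Csimplex m = {z. (\<forall>j\<in>{1..m}. 0 \<le> z j) \<and> (\<Sum>j\<in>{1..m}. z j) \<le> 1}"
proof -
  have "z j \<le> 1" if "\<forall>j\<in>{1..m}. 0 \<le> z j" "(\<Sum>j\<in>{1..m}. z j) \<le> 1" "j \<in> {1..m}"
    for z :: "nat \<Rightarrow> real" and j
    using member_le_sum[of j "{1..m}" z] that by simp
  then show ?thesis
    unfolding Csimplex_def by blast
qed

lemma constraint_eq_capped_simplex:
  "constraint R p a k n m i x = capped_simplex {1..m}
     (\<lambda>j. if j \<in> active R p a k n m i x then omega (Frate R p a k i j) - others_total n x i j else 0)"
  unfolding constraint_def Csimplex_eq capped_simplex_def by (auto simp: order_antisym_conv)

theorem theorem8:
  fixes n m :: nat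
    and R p :: "nat \<Rightarrow> real \<Rightarrow> real"
    and a k :: "nat \<Rightarrow> real"
    and i :: nat
    and x :: "nat \<Rightarrow> nat \<Rightarrow> real"
    and y :: "nat \<Rightarrow> real"
  assumes n: "n \<ge> 1" and m: "m \<ge> 1"
    and R_gt: "\<forall>j\<in>{1..m}. \<forall>t\<ge>0. R j t > 1"
    and p_range: "\<forall>j\<in>{1..m}. \<forall>t\<ge>0. 0 \<le> p j t \<and> p j t \<le> 1"
    and p0: "\<forall>j\<in>{1..m}. p j 0 = 0"
    and p1: "\<forall>j\<in>{1..m}. \<forall>t\<ge>1. p j t = 1"
    and a_range: "\<forall>l\<in>{1..n}. 0 < a l \<and> a l \<le> 1"
    and k_pos: "\<forall>l\<in>{1..n}. k l > 0"
    and F_cont: "\<forall>l\<in>{1..n}. \<forall>j\<in>{1..m}. continuous_on {0..1} (Frate R p a k l j)"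
    and F_deriv: "\<forall>l\<in>{1..n}. \<forall>j\<in>{1..m}. \<exists>F1 F2. \<forall>t\<in>{0<..<1}.
        (Frate R p a k l j has_real_derivative F1 t) (at t) \<and>
        (F1 has_real_derivative F2 t) (at t) \<and> F1 t < 0 \<and> F2 t < 0"
    and i: "i \<in> {1..n}"
    and x_others: "\<forall>l\<in>{1..n} - {i}. x l \<in> Csimplex m"
    and y_feas: "y \<in> constraint R p a k n m i x"
    and y_best: "\<forall>z\<in>constraint R p a k n m i x.
        utility R p a k n m i x z \<le> utility R p a k n m i x y"
  shows
    "(\<exists>J. J \<subseteq> active R p a k n m i x \<and>
        (\<forall>j\<in>active R p a k n m i x - J. y j = 0) \<and>
        (\<Sum>j\<in>J. y j) < 1 \<and>
        (\<forall>j\<in>J. 0 < y j \<and> y j < omega (Frate R p a k i j) - others_total n x i j \<and>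
           psi (Frate R p a k i j) (a i) (y j) (others_total n x i j) = 0) \<and>
        (\<forall>z. (\<forall>j\<in>J. 0 < z j \<and> z j < omega (Frate R p a k i j) - others_total n x i j \<and>
               psi (Frate R p a k i j) (a i) (z j) (others_total n x i j) = 0)
             \<longrightarrow> (\<forall>j\<in>J. z j = y j)))
     \<or>
     (\<exists>J \<kappa>0. J \<subseteq> active R p a k n m i x \<and> \<kappa>0 \<ge> 0 \<and>
        (\<forall>j\<in>active R p a k n m i x - J. y j = 0) \<and>
        (\<Sum>j\<in>J. y j) = 1 \<and>
        (\<forall>j\<in>J. 0 < y j \<and> y j < omega (Frate R p a k i j) - others_total n x i j \<and>
           y j powr (a i - 1) * psi (Frate R p a k i j) (a i) (y j) (others_total n x i j) = \<kappa>0) \<and>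
        (\<forall>z. ((\<Sum>j\<in>J. z j) = 1 \<and>
              (\<forall>j\<in>J. 0 < z j \<and> z j < omega (Frate R p a k i j) - others_total n x i j \<and>
               z j powr (a i - 1) * psi (Frate R p a k i j) (a i) (z j) (others_total n x i j) = \<kappa>0))
             \<longrightarrow> (\<forall>j\<in>J. z j = y j)))"
proof -
  let ?A = "active R p a k n m i x"
  have A_sub: "?A \<subseteq> {1..m}"
    unfolding active_def by auto
  have a_i: "0 < a i" "a i \<le> 1"
    using a_range i by auto
  interpret best_response "{1..m}"
    "\<lambda>j. if j \<in> ?A then omega (Frate R p a k i j) - others_total n x i j else 0"
    "Frate R p a k i" "others_total n x i" "a i" y ?A
  proof (intro best_response.intro capped_simplex_maximizer.intro best_response_axioms.intro)
    show "concave_decreasing_rate (Frate R p a k i j)" if "j \<in> ?A" for j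
    proof -
      have j: "j \<in> {1..m}"
        using that A_sub by auto
      show ?thesis
        using F_cont F_deriv R_gt p0 p1 k_pos i j by (intro concave_decreasing_rate_Frate) auto
    qed
  qed (use y_feas y_best A_sub others_total_nonneg[OF x_others] a_i in
      \<open>auto simp: constraint_eq_capped_simplex utility_def active_def\<close>)
  from type_I_or_type_II show ?thesis
    unfolding type_I_response_def type_II_response_def .
qed

end
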